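(* Let $\xi>0$ and let $V_\xi=\{x+iy:\ \frac{x^2}{\cosh^2\xi}+\frac{y^2}{\sinh^2\xi}<1\}$, the interior of the ellipse with foci $\pm1$. Let $f$ be the conformal map of the unit disc onto $V_\xi$ with $f(0)=0$ and $f'(0)>0$. Its Taylor coefficients vanish in even degrees, so one can write $f(z)=\sum_{n=0}^{\infty}A_n z^{2n+1}$. Then $$\sum_{n=0}^{\infty}A_n^2=\frac{2\sinh^2\xi\cosh^2\xi}{\sinh^2\xi+\cosh^2\xi}=\frac{\sinh^2 2\xi}{2\cosh 2\xi}$$ and $$\sum_{n=0}^{\infty}\Big(\sum_{j=0}^{n}A_jA_{n-j}\Big)^2=\frac{\sinh^4 2\xi}{2\cosh 4\xi}.$$
   Context: The paper parametrizes $\xi$ through $t\in(0,1)$ with $\mu(t)=2\xi$, where $\mu(t)=\frac{\pi K(1,\sqrt{1-t^2})}{2K(1,t)}$ and $K(z,t)=\int_0^z\frac{dx}{\sqrt{(1-x^2)(1-t^2x^2)}}$. In these terms the right-hand sides equal $\frac{\sinh^2\mu(t)}{2\cosh\mu(t)}$ and $\frac{\sinh^4\mu(t)}{2\cosh 2\mu(t)}$ respectively. *)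

theory Defs
  imports "HOL-Complex_Analysis.Complex_Analysis"
begin

definition ellipse_domain :: "real \<Rightarrow> complex set" where
  "ellipse_domain \<xi> = {z. (Re z)\<^sup>2 / (cosh \<xi>)\<^sup>2 + (Im z)\<^sup>2 / (sinh \<xi>)\<^sup>2 < 1}"

definition taylor_coeff :: "(complex \<Rightarrow> complex) \<Rightarrow> nat \<Rightarrow> complex" where
  "taylor_coeff f k = (deriv ^^ k) f 0 / of_nat (fact k)"

end

theory Submission
  imports Defs
begin

text \<open>
  The ellipse is symmetric under \<open>w \<mapsto> -w\<close> and \<open>w \<mapsto> cnj w\<close>, so by uniqueness of the normalised
  Riemann map \<open>f\<close> commutes with both reflections: it is odd and has real Taylor coefficients.

  Let \<open>q(w) = (Re w)\<^sup>2/cosh\<^sup>2\<xi> + (Im w)\<^sup>2/sinh\<^sup>2\<xi>\<close>, so that the ellipse is \<open>q < 1\<close>. On the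
  ellipse, \<open>|w|\<^sup>2\<close> and \<open>|w\<^sup>2|\<^sup>2\<close> coincide with the real parts of explicit polynomials \<open>P(w)\<close>
  up to an error \<open>O(1 - q(w))\<close>. For \<open>G(w) = w\<close> or \<open>w\<^sup>2\<close> with Taylor coefficients \<open>c k\<close> of
  \<open>G \<circ> f\<close>, Parseval's identity writes \<open>\<Sum>k. |c k|\<^sup>2 * r ^ (2*k)\<close> as the mean of \<open>|G(f)|\<^sup>2\<close>
  over \<open>|z| = r\<close>, while the mean of the harmonic function \<open>Re P(f)\<close> is \<open>Re P(0)\<close>. Since \<open>f\<close>
  is proper, \<open>q(f(z)) \<rightarrow> 1\<close> as \<open>|z| \<rightarrow> 1\<close>, so these Abel means tend to \<open>Re P(0)\<close>, and for a
  series of nonnegative terms this is its sum.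
\<close>

section \<open>Taylor coefficients and Parseval's identity\<close>

lemma taylor_coeff_sums:
  assumes "g holomorphic_on ball 0 R" "norm z < R"
  shows "(\<lambda>k. taylor_coeff g k * z ^ k) sums g z"
  using holomorphic_power_series[OF assms(1)] assms(2) by (simp add: taylor_coeff_def)

lemma summable_norm_taylor_series:
  assumes hol: "g holomorphic_on ball 0 R" and z: "norm z < R"
  shows "summable (\<lambda>k. norm (taylor_coeff g k * z ^ k))"
proof -
  obtain \<rho> where \<rho>: "norm z < \<rho>" "\<rho> < R"
    using dense[OF z] by blast
  then have "summable (\<lambda>k. taylor_coeff g k * of_real \<rho> ^ k)"
    using taylor_coeff_sums[OF hol, of "of_real \<rho>"] norm_ge_zero[of z] by (auto simp: sums_iff)
  then show ?thesis
    by (rule powser_insidea) (use \<rho> norm_ge_zero[of z] in auto)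
qed

lemma taylor_coeff_unique:
  assumes R: "R > 0" and sums: "\<And>z. z \<in> ball 0 R \<Longrightarrow> (\<lambda>k. c k * z ^ k) sums g z"
  shows "taylor_coeff g k = c k"
proof -
  have "(\<lambda>k. c k * of_real (R/2) ^ k) sums g (of_real (R/2))"
    using sums[of "of_real (R/2)"] R by simp
  then have "fps_conv_radius (Abs_fps c) \<ge> norm (of_real (R/2) :: complex)"
    unfolding fps_conv_radius_def by (intro conv_radius_geI) (auto simp: sums_iff)
  then have "fps_conv_radius (Abs_fps c) > 0"
    using R by (simp add: less_le_trans[of 0 "ereal (R/2)"])
  moreover have "\<forall>\<^sub>F z in nhds 0. z \<in> ball 0 R"
    using R by (intro eventually_nhds_in_open) auto
  then have "\<forall>\<^sub>F z in nhds 0. eval_fps (Abs_fps c) z = g z"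
  proof (rule eventually_mono)
    fix z :: complex assume "z \<in> ball 0 R"
    then show "eval_fps (Abs_fps c) z = g z"
      using sums[of z] by (simp add: eval_fps_def sums_iff)
  qed
  ultimately have "g has_fps_expansion Abs_fps c"
    by (simp add: has_fps_expansion_def)
  from fps_nth_fps_expansion[OF this, of k] show ?thesis
    by (simp add: taylor_coeff_def)
qed

lemma taylor_coeff_cong:
  assumes hol: "f holomorphic_on ball 0 R" and R: "R > 0" and eq: "\<And>z. z \<in> ball 0 R \<Longrightarrow> g z = f z"
  shows "taylor_coeff g k = taylor_coeff f k"
  using taylor_coeff_sums[OF hol] eq by (intro taylor_coeff_unique[OF R]) auto

lemma taylor_coeff_lacunary:
  assumes R: "R > 0" and m: "strict_mono m"
    and sums: "\<And>z. z \<in> ball 0 R \<Longrightarrow> (\<lambda>n. c n * z ^ m n) sums g z"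
  shows "taylor_coeff g (m n) = c n" and "k \<notin> range m \<Longrightarrow> taylor_coeff g k = 0"
proof -
  define d where "d k = (if k \<in> range m then c (inv m k) else 0)" for k
  have d: "d (m n) = c n" for n
    using strict_mono_imp_inj_on[OF m] by (simp add: d_def)
  have "(\<lambda>k. d k * z ^ k) sums g z" if "z \<in> ball 0 R" for z
    using sums_mono_reindex[OF m, of "\<lambda>k. d k * z ^ k"] sums[OF that] by (simp add: d) (simp add: d_def)
  then have "taylor_coeff g k = d k" for k
    using taylor_coeff_unique[OF R] by blast
  then show "taylor_coeff g (m n) = c n" and "k \<notin> range m \<Longrightarrow> taylor_coeff g k = 0"
    by (simp_all add: d) (simp add: d_def)
qed

lemma taylor_coeff_reflect:
  assumes hol: "f holomorphic_on ball 0 R" and R: "R > 0"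
  shows "taylor_coeff (\<lambda>z. - f (- z)) k = - ((-1) ^ k * taylor_coeff f k)"
proof (rule taylor_coeff_unique[OF R])
  fix z :: complex assume "z \<in> ball 0 R"
  then have "(\<lambda>k. - (taylor_coeff f k * (- z) ^ k)) sums - f (- z)"
    using taylor_coeff_sums[OF hol, of "- z"] by (intro sums_minus) simp
  then show "(\<lambda>k. - ((-1) ^ k * taylor_coeff f k) * z ^ k) sums - f (- z)"
    by (simp add: power_minus[of z] mult_ac)
qed

lemma taylor_coeff_cnj_cnj:
  assumes hol: "f holomorphic_on ball 0 R" and R: "R > 0"
  shows "taylor_coeff (\<lambda>z. cnj (f (cnj z))) k = cnj (taylor_coeff f k)"
proof (rule taylor_coeff_unique[OF R])
  fix z :: complex assume "z \<in> ball 0 R"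
  then have "(\<lambda>k. cnj (taylor_coeff f k * cnj z ^ k)) sums cnj (f (cnj z))"
    using taylor_coeff_sums[OF hol, of "cnj z"] by (subst sums_cnj) simp
  then show "(\<lambda>k. cnj (taylor_coeff f k) * z ^ k) sums cnj (f (cnj z))"
    by simp
qed

lemma odd_power_series_square:
  fixes A :: "nat \<Rightarrow> complex"
  assumes abs: "summable (\<lambda>n. norm (A n * z ^ (2*n+1)))" and sums: "(\<lambda>n. A n * z ^ (2*n+1)) sums w"
  shows "(\<lambda>n. (\<Sum>j\<le>n. A j * A (n - j)) * z ^ (2*n+2)) sums w\<^sup>2"
proof -
  have "(\<Sum>j\<le>n. A j * z ^ (2*j+1) * (A (n - j) * z ^ (2*(n-j)+1))) = (\<Sum>j\<le>n. A j * A (n - j)) * z ^ (2*n+2)" for n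
  proof -
    have "A j * z ^ (2*j+1) * (A (n - j) * z ^ (2*(n-j)+1)) = A j * A (n - j) * z ^ (2*n+2)"
      if "j \<le> n" for j
    proof -
      have "2*j+1 + (2*(n-j)+1) = 2*n+2"
        using that by simp
      then have "z ^ (2*j+1) * z ^ (2*(n-j)+1) = z ^ (2*n+2)"
        by (metis power_add)
      then show ?thesis
        by (metis mult.assoc mult.left_commute)
    qed
    then have "(\<Sum>j\<le>n. A j * z ^ (2*j+1) * (A (n - j) * z ^ (2*(n-j)+1)))
                 = (\<Sum>j\<le>n. A j * A (n - j) * z ^ (2*n+2))"
      by (intro sum.cong) auto
    then show ?thesis
      by (simp only: sum_distrib_right)
  qed
  moreover have "(\<lambda>n. \<Sum>j\<le>n. A j * z ^ (2*j+1) * (A (n - j) * z ^ (2*(n-j)+1))) sums (w * w)"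
    using Cauchy_product_sums[OF abs abs] sums by (simp add: sums_iff)
  ultimately show ?thesis
    by (simp add: power2_eq_square)
qed

lemma has_contour_integral_circlepath_div_iff:
  assumes "r > 0"
  shows "((\<lambda>z. h z / z) has_contour_integral (2*pi*\<i>*m)) (circlepath 0 r) \<longleftrightarrow>
         ((\<lambda>t. h (circlepath 0 r t)) has_integral m) {0..1}"
proof -
  have "((\<lambda>z. h z / z) has_contour_integral (2*pi*\<i>*m)) (circlepath 0 r) \<longleftrightarrow>
        ((\<lambda>t. (2*pi*\<i>) * h (circlepath 0 r t)) has_integral (2*pi*\<i>*m)) {0..1}"
    unfolding has_contour_integral_def
  proof (intro has_integral_cong)
    fix t :: real assume "t \<in> {0..1}"
    then have "vector_derivative (circlepath 0 r) (at t within {0..1}) = 2*pi*\<i> * circlepath 0 r t"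
      by (subst vector_derivative_circlepath01) (auto simp: circlepath)
    then show "h (circlepath 0 r t) / circlepath 0 r t * vector_derivative (circlepath 0 r) (at t within {0..1}) =
          2*pi*\<i> * h (circlepath 0 r t)"
      using assms by (simp add: circlepath)
  qed
  also have "\<dots> \<longleftrightarrow> ((\<lambda>t. h (circlepath 0 r t)) has_integral m) {0..1}"
    by (subst has_integral_mult_right_iff) auto
  finally show ?thesis .
qed

lemma taylor_coeff_contour_integral:
  assumes hol: "g holomorphic_on ball 0 R" and r: "0 < r" "r < R"
  shows "((\<lambda>u. g u / u ^ Suc k) has_contour_integral (2*pi*\<i> * taylor_coeff g k)) (circlepath 0 r)"
proof -
  have sub: "cball 0 r \<subseteq> ball 0 R"
    using r by auto
  have "((\<lambda>u. g u / (u - 0) ^ Suc k) has_contour_integral (2*pi*\<i> / fact k * (deriv ^^ k) g 0))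
          (circlepath 0 r)"
    using r holomorphic_on_subset[OF hol sub] holomorphic_on_imp_continuous_on
    by (intro Cauchy_has_contour_integral_higher_derivative_circlepath) (auto intro: holomorphic_on_subset)
  then show ?thesis
    by (simp add: taylor_coeff_def)
qed

lemma mean_value_circlepath:
  assumes "h holomorphic_on ball 0 R" "0 < r" "r < R"
  shows "((\<lambda>t. h (circlepath 0 r t)) has_integral h 0) {0..1}"
  using taylor_coeff_contour_integral[OF assms, of 0] has_contour_integral_circlepath_div_iff[OF assms(2)]
  by (simp add: taylor_coeff_def)

lemma has_contour_integral_circlepath_series:
  assumes r: "0 < r"
    and lim: "uniform_limit (sphere z r) (\<lambda>N u. \<Sum>k<N. T k u) F sequentially"
    and T: "\<And>k. (T k has_contour_integral I k) (circlepath z r)"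
  shows "I sums contour_integral (circlepath z r) F"
    and "F contour_integrable_on circlepath z r"
proof -
  have partial: "((\<lambda>u. \<Sum>k<N. T k u) has_contour_integral (\<Sum>k<N. I k)) (circlepath z r)" for N
    by (rule has_contour_integral_sum) (use T in auto)
  have int: "\<forall>\<^sub>F N in sequentially. (\<lambda>u. \<Sum>k<N. T k u) contour_integrable_on circlepath z r"
    using partial by (blast intro: always_eventually has_contour_integral_integrable)
  show "F contour_integrable_on circlepath z r"
    by (rule contour_integral_uniform_limit_circlepath(1)[OF int lim _ r]) simp
  have "(\<lambda>N. contour_integral (circlepath z r) (\<lambda>u. \<Sum>k<N. T k u))
          \<longlonglongrightarrow> contour_integral (circlepath z r) F"
    by (rule contour_integral_uniform_limit_circlepath(2)[OF int lim _ r]) simp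
  moreover have "contour_integral (circlepath z r) (\<lambda>u. \<Sum>k<N. T k u) = (\<Sum>k<N. I k)" for N
    using partial by (rule contour_integral_unique)
  ultimately show "I sums contour_integral (circlepath z r) F"
    by (simp add: sums_def)
qed

lemma sums_norm_sq_div_conj_taylor:
  assumes hol: "g holomorphic_on ball 0 R" and u: "norm u = r" "0 < r" "r < R"
  shows "(\<lambda>k. cnj (taylor_coeff g k) * of_real (r ^ (2*k)) * (g u / u ^ Suc k))
           sums (of_real (norm (g u) ^ 2) / u)"
proof -
  have "u \<noteq> 0"
    using u by auto
  have "of_real (r ^ (2*k)) / u ^ Suc k = cnj u ^ k / u" for k
  proof -
    have "of_real (r ^ (2*k)) = u ^ k * cnj u ^ k"
      using complex_norm_square[of u] u(1) by (simp add: power_mult power_mult_distrib)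
    then show ?thesis
      using \<open>u \<noteq> 0\<close> by simp
  qed
  then have "cnj (taylor_coeff g k) * of_real (r ^ (2*k)) * (g u / u ^ Suc k)
               = g u / u * cnj (taylor_coeff g k * u ^ k)" for k
    by (simp only: divide_inverse complex_cnj_mult complex_cnj_power ac_simps)
  moreover have "(\<lambda>k. cnj (taylor_coeff g k * u ^ k)) sums cnj (g u)"
    using taylor_coeff_sums[OF hol, of u] u by (subst sums_cnj) simp
  then have "(\<lambda>k. g u / u * cnj (taylor_coeff g k * u ^ k)) sums (g u / u * cnj (g u))"
    by (rule sums_mult)
  ultimately show ?thesis
    using complex_norm_square[of "g u"] by (simp add: mult.commute)
qed

lemma uniform_limit_norm_sq_div_conj_taylor:
  assumes hol: "g holomorphic_on ball 0 R" and r: "0 < r" "r < R"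
  shows "uniform_limit (sphere 0 r)
           (\<lambda>N u. \<Sum>k<N. cnj (taylor_coeff g k) * of_real (r ^ (2*k)) * (g u / u ^ Suc k))
           (\<lambda>u. of_real (norm (g u) ^ 2) / u) sequentially"
proof -
  define b where "b = taylor_coeff g"
  define T where "T = (\<lambda>k u. cnj (b k) * of_real (r ^ (2*k)) * (g u / u ^ Suc k))"
  have "cball 0 r \<subseteq> ball 0 R"
    using r by auto
  then have "compact (g ` sphere 0 r)"
    by (intro compact_continuous_image continuous_on_subset[OF holomorphic_on_imp_continuous_on[OF hol]])
       auto
  then obtain G where G: "\<And>u. u \<in> sphere 0 r \<Longrightarrow> norm (g u) \<le> G"
    by (meson bounded_iff compact_imp_bounded imageI)
  have "norm (T k u) \<le> G / r * (norm (b k * of_real r ^ k))" if "u \<in> sphere 0 r" for k u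
  proof -
    have "norm (T k u) = norm (b k) * r ^ (2*k) * norm (g u) / r ^ Suc k"
      using that r by (simp add: T_def norm_mult norm_divide norm_power)
    also have "\<dots> = norm (b k) * r ^ k * norm (g u) / r"
      using r by (simp add: mult_2 power_add)
    also have "\<dots> \<le> norm (b k) * r ^ k * G / r"
      using r G[OF that] by (intro divide_right_mono mult_left_mono) auto
    also have "\<dots> = G / r * norm (b k * of_real r ^ k)"
      using r by (simp add: norm_mult norm_power)
    finally show ?thesis .
  qed
  moreover have "summable (\<lambda>k. G / r * norm (b k * of_real r ^ k))"
    using summable_norm_taylor_series[OF hol, of "of_real r"] r by (intro summable_mult) (simp add: b_def)
  ultimately have "uniform_limit (sphere 0 r) (\<lambda>N u. \<Sum>k<N. T k u) (\<lambda>u. \<Sum>k. T k u) sequentially"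
    by (rule Weierstrass_m_test)
  moreover have "(\<Sum>k. T k u) = of_real (norm (g u) ^ 2) / u" if "u \<in> sphere 0 r" for u
    using sums_norm_sq_div_conj_taylor[OF hol _ r] that by (simp add: T_def b_def sums_iff)
  ultimately show ?thesis
    unfolding T_def b_def
    by (subst uniform_limit_cong'[where g = "\<lambda>N u. \<Sum>k<N. T k u" and i = "\<lambda>u. \<Sum>k. T k u"])
       (auto simp: T_def b_def)
qed

text \<open>Integrating the series for \<open>|g|\<^sup>2/u\<close> termwise, each term is a Cauchy integral for a
  Taylor coefficient.\<close>

lemma parseval_circlepath:
  assumes hol: "g holomorphic_on ball 0 R" and r: "0 < r" "r < R"
  shows "summable (\<lambda>k. norm (taylor_coeff g k) ^ 2 * r ^ (2*k))"
    and "((\<lambda>t. norm (g (circlepath 0 r t)) ^ 2) has_integral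
           (\<Sum>k. norm (taylor_coeff g k) ^ 2 * r ^ (2*k))) {0..1}"
proof -
  define b where "b = taylor_coeff g"
  define T where "T = (\<lambda>k u. cnj (b k) * of_real (r ^ (2*k)) * (g u / u ^ Suc k))"
  define a where "a = (\<lambda>k. norm (b k) ^ 2 * r ^ (2*k))"
  have T: "(T k has_contour_integral (2*pi*\<i> * of_real (a k))) (circlepath 0 r)" for k
  proof -
    have "(T k has_contour_integral (cnj (b k) * of_real (r ^ (2*k)) * (2*pi*\<i> * b k))) (circlepath 0 r)"
      unfolding T_def b_def by (intro has_contour_integral_lmul taylor_coeff_contour_integral[OF hol r])
    moreover have "cnj (b k) * of_real (r ^ (2*k)) * (2*pi*\<i> * b k) = 2*pi*\<i> * of_real (a k)"
      using complex_norm_square[of "b k"] by (simp add: a_def mult_ac)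
    ultimately show ?thesis
      by metis
  qed
  have lim: "uniform_limit (sphere 0 r) (\<lambda>N u. \<Sum>k<N. T k u) (\<lambda>u. of_real (norm (g u) ^ 2) / u) sequentially"
    using uniform_limit_norm_sq_div_conj_taylor[OF hol r] by (simp add: T_def b_def)
  define C where "C = contour_integral (circlepath 0 r) (\<lambda>u. of_real (norm (g u) ^ 2) / u)"
  have "(\<lambda>k. 2*pi*\<i> * of_real (a k)) sums C"
    using has_contour_integral_circlepath_series(1)[OF r(1) lim T] by (simp add: C_def)
  from sums_divide[OF this, of "2*pi*\<i>"]
  have a_sums: "(\<lambda>k. of_real (a k)) sums (C / (2*pi*\<i>))"
    by simp
  then have "summable a"
    using summable_of_real_iff[of a] by (auto simp: sums_iff)
  then show "summable (\<lambda>k. norm (taylor_coeff g k) ^ 2 * r ^ (2*k))"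
    by (simp add: a_def b_def)
  have "(\<lambda>k. complex_of_real (a k)) sums of_real (suminf a)"
    using \<open>summable a\<close> by (simp add: sums_of_real_iff summable_sums)
  then have "C = 2*pi*\<i> * of_real (suminf a)"
    using sums_unique2[OF a_sums] by (simp add: field_simps)
  moreover have "((\<lambda>u. of_real (norm (g u) ^ 2) / u) has_contour_integral C) (circlepath 0 r)"
    using has_contour_integral_circlepath_series(2)[OF r(1) lim T]
    by (simp add: C_def has_contour_integral_integral)
  ultimately have "((\<lambda>t. of_real (norm (g (circlepath 0 r t)) ^ 2)) has_integral
                    complex_of_real (suminf a)) {0..1}"
    using has_contour_integral_circlepath_div_iff[OF r(1), of "\<lambda>u. of_real (norm (g u) ^ 2)"] by simp
  from has_integral_linear[OF this bounded_linear_Re]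
  show "((\<lambda>t. norm (g (circlepath 0 r t)) ^ 2) has_integral
           (\<Sum>k. norm (taylor_coeff g k) ^ 2 * r ^ (2*k))) {0..1}"
    by (simp add: o_def a_def b_def)
qed

lemma parseval_harmonic_remainder:
  assumes holg: "g holomorphic_on ball 0 1" and holh: "h holomorphic_on ball 0 1"
    and r: "0 < r" "r < 1"
    and bound: "\<And>z. norm z = r \<Longrightarrow> \<bar>norm (g z) ^ 2 - Re (h z)\<bar> \<le> B"
  shows "\<bar>(\<Sum>k. norm (taylor_coeff g k) ^ 2 * r ^ (2*k)) - Re (h 0)\<bar> \<le> B"
proof -
  have "((\<lambda>t. Re (h (circlepath 0 r t))) has_integral Re (h 0)) {0..1}"
    using has_integral_linear[OF mean_value_circlepath[OF holh r] bounded_linear_Re] by (simp add: o_def)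
  with parseval_circlepath(2)[OF holg r]
  have "((\<lambda>t. norm (g (circlepath 0 r t)) ^ 2 - Re (h (circlepath 0 r t))) has_integral
          (\<Sum>k. norm (taylor_coeff g k) ^ 2 * r ^ (2*k)) - Re (h 0)) (cbox 0 1)"
    by (simp add: has_integral_diff)
  moreover have "norm (circlepath 0 r t) = r" for t
    using r by (simp add: circlepath norm_mult)
  moreover have "0 \<le> B"
    using bound[of "of_real r"] r by (smt (verit) norm_of_real)
  ultimately have "norm ((\<Sum>k. norm (taylor_coeff g k) ^ 2 * r ^ (2*k)) - Re (h 0)) \<le> B * measure lborel (cbox 0 (1::real))"
    using bound by (intro has_integral_bound) auto
  then show ?thesis
    by simp
qed

lemma nonneg_Abel_limit_sums:
  fixes a :: "nat \<Rightarrow> real"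
  assumes nonneg: "\<And>k. 0 \<le> a k"
    and summable: "\<And>r. 0 < r \<Longrightarrow> r < 1 \<Longrightarrow> summable (\<lambda>k. a k * r ^ k)"
    and lim: "((\<lambda>r. \<Sum>k. a k * r ^ k) \<longlongrightarrow> e) (at_left 1)"
  shows "a sums e"
proof -
  have inside: "\<forall>\<^sub>F r in at_left (1::real). 0 < r \<and> r < 1"
    using eventually_at_left_real[of 0 1] by (rule eventually_mono) auto
  have partial: "(\<Sum>k<N. a k) \<le> e" for N
  proof -
    have "((\<lambda>r. \<Sum>k<N. a k * r ^ k) \<longlongrightarrow> (\<Sum>k<N. a k * 1 ^ k)) (at_left 1)"
      by (intro tendsto_intros)
    moreover have "\<forall>\<^sub>F r in at_left 1. (\<Sum>k<N. a k * r ^ k) \<le> (\<Sum>k. a k * r ^ k)"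
      using inside by (rule eventually_mono) (auto intro!: sum_le_suminf summable nonneg mult_nonneg_nonneg)
    ultimately show ?thesis
      using lim by (simp add: tendsto_le[OF _ lim])
  qed
  then have "(\<Sum>k\<le>n. a k) \<le> e" for n
    using partial[of "Suc n"] by (simp add: lessThan_Suc_atMost)
  then have "summable a"
    using nonneg by (intro bounded_imp_summable[of _ e])
  have "(\<Sum>k. a k * r ^ k) \<le> suminf a" if "0 < r" "r < 1" for r
    using that nonneg by (intro suminf_le summable \<open>summable a\<close>) (auto intro!: mult_left_le power_le_one)
  then have "e \<le> suminf a"
    using inside by (intro tendsto_upperbound[OF lim]) (auto elim: eventually_mono)
  with \<open>summable a\<close> show ?thesis
    using suminf_le_const[OF \<open>summable a\<close> partial] by (simp add: sums_iff)
qed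

lemma filterlim_sqrt_at_left_1: "filterlim sqrt (at_left 1) (at_left (1::real))"
proof (rule filterlim_at_withinI)
  show "filterlim sqrt (nhds 1) (at_left (1::real))"
    using tendsto_real_sqrt[of "\<lambda>x. x" 1 "at_left 1"] by simp
  show "\<forall>\<^sub>F x in at_left 1. sqrt x \<in> {..<1} - {1}"
    using eventually_at_left_real[of 0 1] by (rule eventually_mono) auto
qed

section \<open>Conformal maps of the unit disc\<close>

lemma disc_automorphism_rotation:
  assumes holh: "h holomorphic_on ball 0 1" and h0: "h 0 = 0" and h: "\<And>z. norm z < 1 \<Longrightarrow> norm (h z) < 1"
    and holk: "k holomorphic_on ball 0 1" and k0: "k 0 = 0" and k: "\<And>z. norm z < 1 \<Longrightarrow> norm (k z) < 1"
    and inverse: "\<And>z. norm z < 1 \<Longrightarrow> k (h z) = z"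
  obtains \<alpha> where "norm \<alpha> = 1" "\<And>z. norm z < 1 \<Longrightarrow> h z = \<alpha> * z"
proof -
  define z0 :: complex where "z0 = 1/2"
  have z0: "norm z0 < 1" "z0 \<noteq> 0"
    by (auto simp: z0_def)
  have "norm z0 = norm (k (h z0))"
    using inverse z0 by simp
  also have "\<dots> \<le> norm (h z0)"
    using Schwarz_Lemma(1)[OF holk k0 k] h z0 by simp
  finally have "norm (h z0) = norm z0"
    using Schwarz_Lemma(1)[OF holh h0 h z0(1)] by simp
  then have "\<exists>\<alpha>. (\<forall>z. norm z < 1 \<longrightarrow> h z = \<alpha> * z) \<and> norm \<alpha> = 1"
    using z0 by (intro Schwarz_Lemma(3)[OF holh h0 h z0(1)]) auto
  then show ?thesis
    using that by auto
qed

lemma conformal_maps_same_image_rotation: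
  assumes holf: "f holomorphic_on ball 0 1" and injf: "inj_on f (ball 0 1)"
    and holg: "g holomorphic_on ball 0 1" and injg: "inj_on g (ball 0 1)"
    and image: "g ` ball 0 1 = f ` ball 0 1" and f0: "f 0 = 0" and g0: "g 0 = 0"
  obtains \<alpha> where "norm \<alpha> = 1" "\<And>z. z \<in> ball 0 1 \<Longrightarrow> g z = f (\<alpha> * z)"
proof -
  obtain finv where finv_hol: "finv holomorphic_on f ` ball 0 1"
     and finv: "\<And>z. z \<in> ball 0 1 \<Longrightarrow> finv (f z) = z"
    using holomorphic_has_inverse[OF holf open_ball injf] by metis
  obtain ginv where ginv_hol: "ginv holomorphic_on g ` ball 0 1"
     and ginv: "\<And>z. z \<in> ball 0 1 \<Longrightarrow> ginv (g z) = z"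
    using holomorphic_has_inverse[OF holg open_ball injg] by metis
  have h: "finv (g z) \<in> ball 0 1 \<and> f (finv (g z)) = g z" if "z \<in> ball 0 1" for z
  proof -
    have "g z \<in> f ` ball 0 1"
      using that unfolding image[symmetric] by (rule imageI)
    then obtain y where "y \<in> ball 0 1" "g z = f y"
      by (elim imageE) auto
    then show ?thesis
      using finv by simp
  qed
  have k: "ginv (f z) \<in> ball 0 1 \<and> g (ginv (f z)) = f z" if "z \<in> ball 0 1" for z
  proof -
    have "f z \<in> g ` ball 0 1"
      using that unfolding image by (rule imageI)
    then obtain y where "y \<in> ball 0 1" "f z = g y"
      by (elim imageE) auto
    then show ?thesis
      using ginv by simp
  qed
  obtain \<alpha> where "norm \<alpha> = 1" and \<alpha>: "\<And>z. norm z < 1 \<Longrightarrow> finv (g z) = \<alpha> * z"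
  proof (rule disc_automorphism_rotation[of "\<lambda>z. finv (g z)" "\<lambda>z. ginv (f z)"])
    show "(\<lambda>z. finv (g z)) holomorphic_on ball 0 1"
      using holomorphic_on_compose_gen[OF holg finv_hol] image by (simp add: o_def)
    show "(\<lambda>z. ginv (f z)) holomorphic_on ball 0 1"
      using holomorphic_on_compose_gen[OF holf ginv_hol] image by (simp add: o_def)
    show "finv (g 0) = 0" "ginv (f 0) = 0"
      using finv[of 0] ginv[of 0] f0 g0 by simp_all
    show "ginv (f (finv (g z))) = z" if "norm z < 1" for z
      using h[of z] ginv[of z] that by simp
    show "norm (finv (g z)) < 1" if "norm z < 1" for z
      using h[of z] that by simp
    show "norm (ginv (f z)) < 1" if "norm z < 1" for z
      using k[of z] that by simp
  qed blast
  then show ?thesis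
    using that h \<alpha> by simp
qed

lemma conformal_map_unique:
  assumes holf: "f holomorphic_on ball 0 1" and injf: "inj_on f (ball 0 1)"
    and holg: "g holomorphic_on ball 0 1" and injg: "inj_on g (ball 0 1)"
    and image: "g ` ball 0 1 = f ` ball 0 1" and f0: "f 0 = 0" and g0: "g 0 = 0"
    and deriv: "deriv g 0 = deriv f 0" "deriv f 0 \<noteq> 0"
    and z: "z \<in> ball 0 1"
  shows "g z = f z"
proof -
  obtain \<alpha> where g_eq: "\<And>z. z \<in> ball 0 1 \<Longrightarrow> g z = f (\<alpha> * z)"
    using conformal_maps_same_image_rotation[OF holf injf holg injg image f0 g0] by blast
  have "((\<lambda>z. f (\<alpha> * z)) has_field_derivative deriv f (\<alpha> * 0) * \<alpha>) (at 0)"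
    by (rule DERIV_chain2[of f]) (auto intro!: holomorphic_derivI[OF holf] derivative_eq_intros)
  then have "(g has_field_derivative deriv f 0 * \<alpha>) (at 0)"
    unfolding mult_zero_right
    by (rule has_field_derivative_transform_within_open[of _ _ _ "ball 0 1"]) (auto simp: g_eq)
  then have "deriv f 0 = deriv f 0 * \<alpha>"
    using deriv(1) by (simp add: DERIV_imp_deriv)
  then have "\<alpha> = 1"
    using deriv(2) by simp
  then show ?thesis
    using g_eq z by simp
qed

lemma conformal_map_symmetric:
  assumes holf: "f holomorphic_on ball 0 1" and injf: "inj_on f (ball 0 1)" and f0: "f 0 = 0"
    and df: "deriv f 0 \<noteq> 0"
    and \<sigma>: "inj \<sigma>" "\<sigma> ` ball 0 1 = ball 0 1" and \<tau>: "inj \<tau>" "\<tau> ` f ` ball 0 1 = f ` ball 0 1"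
    and hol: "(\<lambda>z. \<tau> (f (\<sigma> z))) holomorphic_on ball 0 1"
    and zero: "\<tau> (f (\<sigma> 0)) = 0" and deriv: "deriv (\<lambda>z. \<tau> (f (\<sigma> z))) 0 = deriv f 0"
    and z: "z \<in> ball 0 1"
  shows "\<tau> (f (\<sigma> z)) = f z"
proof (rule conformal_map_unique[OF holf injf hol _ _ f0 zero deriv df z])
  show "inj_on (\<lambda>z. \<tau> (f (\<sigma> z))) (ball 0 1)"
  proof (rule inj_onI)
    fix x y assume xy: "x \<in> ball 0 1" "y \<in> ball 0 1" and eq: "\<tau> (f (\<sigma> x)) = \<tau> (f (\<sigma> y))"
    have "\<sigma> x \<in> ball 0 1" "\<sigma> y \<in> ball 0 1"
      using imageI[OF xy(1), of \<sigma>] imageI[OF xy(2), of \<sigma>] \<sigma>(2) by simp_all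
    moreover have "f (\<sigma> x) = f (\<sigma> y)"
      using injD[OF \<tau>(1) eq] .
    ultimately have "\<sigma> x = \<sigma> y"
      using injf by (simp add: inj_on_eq_iff)
    then show "x = y"
      using \<sigma>(1) by (simp add: inj_eq)
  qed
  have "(\<lambda>z. \<tau> (f (\<sigma> z))) ` ball 0 1 = \<tau> ` f ` \<sigma> ` ball 0 1"
    by (simp add: image_image)
  then show "(\<lambda>z. \<tau> (f (\<sigma> z))) ` ball 0 1 = f ` ball 0 1"
    using \<sigma>(2) \<tau>(2) by simp
qed

lemma eventually_circle_image_avoids_compact:
  assumes hol: "f holomorphic_on ball 0 1" and inj: "inj_on f (ball 0 1)"
    and K: "compact K" "K \<subseteq> f ` ball 0 1"
  shows "\<forall>\<^sub>F r in at_left 1. \<forall>z. norm z = r \<longrightarrow> f z \<notin> K"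
proof -
  obtain g where g_hol: "g holomorphic_on f ` ball 0 1" and g: "\<And>z. z \<in> ball 0 1 \<Longrightarrow> g (f z) = z"
    using holomorphic_has_inverse[OF hol open_ball inj] by metis
  txt \<open>Adding \<open>0\<close> makes the preimage of \<open>K\<close> nonempty, so that its norm attains a maximum.\<close>
  have "compact (insert 0 (g ` K))"
    using K by (intro compact_insert compact_continuous_image
                  continuous_on_subset[OF holomorphic_on_imp_continuous_on[OF g_hol]])
  then obtain z0 where z0: "z0 \<in> insert 0 (g ` K)" and max: "\<And>z. z \<in> insert 0 (g ` K) \<Longrightarrow> norm z \<le> norm z0"
    using continuous_attains_sup[of _ norm] by (metis continuous_on_norm_id insert_not_empty)
  have "g ` K \<subseteq> ball 0 1"
    using K(2) g by auto
  then have "norm z0 < 1"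
    using z0 by auto
  have "f z \<notin> K" if "norm z0 < norm z" "norm z < 1" for z
  proof
    assume "f z \<in> K"
    then have "z \<in> g ` K"
      using g[of z] that by (metis image_eqI mem_ball_0)
    then show False
      using max[of z] that by auto
  qed
  with eventually_at_left_real[OF \<open>norm z0 < 1\<close>] show ?thesis
    by (elim eventually_mono) auto
qed

lemma inj_cnj: "inj cnj"
  by (rule inj_on_inverseI[of _ cnj]) simp

lemma uminus_ball_0: "uminus ` ball 0 r = (ball 0 r :: complex set)"
  by (auto intro: rev_image_eqI[of "- w" for w])

lemma cnj_ball_0: "cnj ` ball 0 r = ball 0 r"
  by (auto intro: rev_image_eqI[of "cnj w" for w])

section \<open>The ellipse\<close>

definition ellipse_form :: "real \<Rightarrow> complex \<Rightarrow> real" where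
  "ellipse_form \<xi> w = (Re w)\<^sup>2 / (cosh \<xi>)\<^sup>2 + (Im w)\<^sup>2 / (sinh \<xi>)\<^sup>2"

lemma ellipse_domain_eq: "ellipse_domain \<xi> = {w. ellipse_form \<xi> w < 1}"
  by (simp add: ellipse_domain_def ellipse_form_def)

lemma ellipse_form_le_1_bounds:
  assumes "\<xi> \<noteq> 0" "ellipse_form \<xi> w \<le> 1"
  shows "(Re w)\<^sup>2 \<le> (cosh \<xi>)\<^sup>2" "(Im w)\<^sup>2 \<le> (sinh \<xi>)\<^sup>2"
proof -
  have pos: "(cosh \<xi>)\<^sup>2 > 0" "(sinh \<xi>)\<^sup>2 > 0"
    using assms(1) by auto
  have "(Re w)\<^sup>2 / (cosh \<xi>)\<^sup>2 \<ge> 0" "(Im w)\<^sup>2 / (sinh \<xi>)\<^sup>2 \<ge> 0"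
    by simp_all
  then have "(Re w)\<^sup>2 / (cosh \<xi>)\<^sup>2 \<le> 1" "(Im w)\<^sup>2 / (sinh \<xi>)\<^sup>2 \<le> 1"
    using assms(2) unfolding ellipse_form_def by linarith+
  then show "(Re w)\<^sup>2 \<le> (cosh \<xi>)\<^sup>2" "(Im w)\<^sup>2 \<le> (sinh \<xi>)\<^sup>2"
    using pos by (simp_all add: divide_le_eq)
qed

lemma compact_ellipse_sublevel:
  assumes "\<xi> \<noteq> 0" "c \<le> 1"
  shows "compact {w. ellipse_form \<xi> w \<le> c}"
proof (rule compact_eq_bounded_closed[THEN iffD2], intro conjI)
  show "closed {w. ellipse_form \<xi> w \<le> c}"
    unfolding ellipse_form_def using assms(1) by (intro closed_Collect_le continuous_intros) auto
  show "bounded {w. ellipse_form \<xi> w \<le> c}"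
  proof (rule boundedI)
    fix w assume "w \<in> {w. ellipse_form \<xi> w \<le> c}"
    then have "(Re w)\<^sup>2 \<le> (cosh \<xi>)\<^sup>2" "(Im w)\<^sup>2 \<le> (sinh \<xi>)\<^sup>2"
      using assms ellipse_form_le_1_bounds[of \<xi> w] by auto
    then have "\<bar>Re w\<bar> \<le> cosh \<xi>" "\<bar>Im w\<bar> \<le> \<bar>sinh \<xi>\<bar>"
      using abs_le_square_iff[of "Re w" "cosh \<xi>"] abs_le_square_iff[of "Im w" "sinh \<xi>"] by simp_all
    then show "norm w \<le> cosh \<xi> + \<bar>sinh \<xi>\<bar>"
      using cmod_le[of w] by linarith
  qed
qed

lemma uminus_ellipse_domain: "uminus ` ellipse_domain \<xi> = ellipse_domain \<xi>"
proof -
  have "w \<in> ellipse_domain \<xi> \<longleftrightarrow> - w \<in> ellipse_domain \<xi>" for w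
    by (simp add: ellipse_domain_def)
  then show ?thesis
    by (auto intro: rev_image_eqI[of "- w" for w])
qed

lemma cnj_ellipse_domain: "cnj ` ellipse_domain \<xi> = ellipse_domain \<xi>"
proof -
  have "w \<in> ellipse_domain \<xi> \<longleftrightarrow> cnj w \<in> ellipse_domain \<xi>" for w
    by (simp add: ellipse_domain_def)
  then show ?thesis
    by (auto intro: rev_image_eqI[of "cnj w" for w])
qed

lemma Re_power4: "Re (w ^ 4) = (Re w)\<^sup>2 ^ 2 - 6 * (Re w)\<^sup>2 * (Im w)\<^sup>2 + (Im w)\<^sup>2 ^ 2"
proof -
  have "Re (w ^ 4) = (Re (w\<^sup>2))\<^sup>2 - (Im (w\<^sup>2))\<^sup>2"
    using Re_power2[of "w\<^sup>2"] by (simp flip: power_mult)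
  then show ?thesis
    by (simp add: Re_power2 Im_power2 algebra_simps power2_eq_square)
qed

lemma norm_sq_ellipse_decomposition:
  fixes w :: complex
  assumes "\<xi> \<noteq> 0"
  defines "\<alpha> \<equiv> 1 / ((cosh \<xi>)\<^sup>2 + (sinh \<xi>)\<^sup>2)"
    and "\<beta> \<equiv> 2 * (sinh \<xi>)\<^sup>2 * (cosh \<xi>)\<^sup>2 / ((sinh \<xi>)\<^sup>2 + (cosh \<xi>)\<^sup>2)"
  shows "(norm w)\<^sup>2 - Re (of_real \<alpha> * w\<^sup>2 + of_real \<beta>) = \<beta> * (ellipse_form \<xi> w - 1)"
proof -
  define S where "S = (sinh \<xi>)\<^sup>2"
  have S: "S > 0" "(cosh \<xi>)\<^sup>2 = S + 1"
    using assms(1) by (simp_all add: S_def cosh_square_eq)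
  have "(norm w)\<^sup>2 - Re (of_real \<alpha> * w\<^sup>2 + of_real \<beta>)
          = (Re w)\<^sup>2 + (Im w)\<^sup>2 - \<alpha> * ((Re w)\<^sup>2 - (Im w)\<^sup>2) - \<beta>"
    by (simp add: cmod_power2 Re_power2)
  also have "\<dots> = \<beta> * ((Re w)\<^sup>2 / (S + 1) + (Im w)\<^sup>2 / S - 1)"
  proof -
    have "\<alpha> * (2 * S + 1) = 1" "\<beta> = 2 * S * (S + 1) * \<alpha>"
      using S by (simp_all add: \<alpha>_def \<beta>_def S_def[symmetric])
    moreover have "1 / (S + 1) * (S + 1) = 1" "1 / S * S = 1"
      using S by simp_all
    ultimately show ?thesis
      unfolding divide_inverse by algebra
  qed
  finally show ?thesis
    by (simp add: ellipse_form_def S S_def)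
qed

lemma cosh_4x: "cosh (4 * x :: real) = (2 * (sinh x)\<^sup>2 + 1)\<^sup>2 + 4 * (sinh x)\<^sup>2 * ((sinh x)\<^sup>2 + 1)"
proof -
  have "cosh (4 * x) = (cosh (2 * x))\<^sup>2 + (sinh (2 * x))\<^sup>2"
    using cosh_double[of "2 * x"] by simp
  moreover have "cosh (2 * x) = 2 * (sinh x)\<^sup>2 + 1"
    by (simp add: cosh_double cosh_square_eq)
  moreover have "(sinh (2 * x))\<^sup>2 = 4 * (sinh x)\<^sup>2 * ((sinh x)\<^sup>2 + 1)"
    by (simp add: sinh_double power_mult_distrib cosh_square_eq)
  ultimately show ?thesis
    by simp
qed

lemma norm_sq_square_ellipse_decomposition:
  fixes w :: complex
  assumes "\<xi> \<noteq> 0"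
  defines "a \<equiv> 1 / cosh (4 * \<xi>)" and "e \<equiv> (sinh \<xi>)\<^sup>2 * (cosh \<xi>)\<^sup>2 * (1 - 1 / cosh (4 * \<xi>))"
  shows "(norm (w\<^sup>2))\<^sup>2 - Re (of_real a * w ^ 4 + of_real (1 - a) * w\<^sup>2 + of_real e)
           = (ellipse_form \<xi> w - 1)
             * ((1 - a) * ((cosh \<xi>)\<^sup>2 * (Re w)\<^sup>2 + (sinh \<xi>)\<^sup>2 * (Im w)\<^sup>2 + (cosh \<xi>)\<^sup>2 * (sinh \<xi>)\<^sup>2))"
proof -
  define S where "S = (sinh \<xi>)\<^sup>2"
  define X Y where "X = (Re w)\<^sup>2" and "Y = (Im w)\<^sup>2"
  have S: "S > 0" "(cosh \<xi>)\<^sup>2 = S + 1"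
    using assms(1) by (simp_all add: S_def cosh_square_eq)
  have "a * ((2 * S + 1)\<^sup>2 + 4 * S * (S + 1)) = 1"
    using cosh_4x[of \<xi>] cosh_real_pos[of "4 * \<xi>"] by (simp add: a_def S_def)
  moreover have "1 / (S + 1) * (S + 1) = 1" "1 / S * S = 1"
    using S by simp_all
  ultimately have "(X + Y)\<^sup>2 - (a * (X\<^sup>2 - 6 * X * Y + Y\<^sup>2) + (1 - a) * (X - Y) + S * (S + 1) * (1 - a))
      = (X / (S + 1) + Y / S - 1) * ((1 - a) * ((S + 1) * X + S * Y + (S + 1) * S))"
    unfolding divide_inverse by algebra
  moreover have "(norm (w\<^sup>2))\<^sup>2 = (X + Y)\<^sup>2"
    by (simp add: X_def Y_def norm_power cmod_power2)
  moreover have "Re (of_real a * w ^ 4 + of_real (1 - a) * w\<^sup>2 + of_real e)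
                   = a * (X\<^sup>2 - 6 * X * Y + Y\<^sup>2) + (1 - a) * (X - Y) + S * (S + 1) * (1 - a)"
    by (simp add: Re_power4 Re_power2 X_def Y_def e_def a_def S S_def[symmetric] mult_ac)
  moreover have "ellipse_form \<xi> w = X / (S + 1) + Y / S"
    by (simp add: ellipse_form_def X_def Y_def S S_def[symmetric])
  ultimately show ?thesis
    by (simp add: S S_def[symmetric] X_def[symmetric] Y_def[symmetric] mult_ac)
qed

lemma norm_sq_square_ellipse_approx:
  fixes w :: complex
  assumes "\<xi> \<noteq> 0" and w: "w \<in> ellipse_domain \<xi>"
  defines "a \<equiv> 1 / cosh (4 * \<xi>)"
    and "e \<equiv> (sinh \<xi>)\<^sup>2 * (cosh \<xi>)\<^sup>2 * (1 - 1 / cosh (4 * \<xi>))"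
    and "M \<equiv> (1 - 1 / cosh (4 * \<xi>))
               * ((cosh \<xi>)\<^sup>2 * (cosh \<xi>)\<^sup>2 + (sinh \<xi>)\<^sup>2 * (sinh \<xi>)\<^sup>2 + (cosh \<xi>)\<^sup>2 * (sinh \<xi>)\<^sup>2)"
  shows "\<bar>(norm (w\<^sup>2))\<^sup>2 - Re (of_real a * w ^ 4 + of_real (1 - a) * w\<^sup>2 + of_real e)\<bar>
           \<le> M * (1 - ellipse_form \<xi> w)"
proof -
  define R where "R = (1 - a)
    * ((cosh \<xi>)\<^sup>2 * (Re w)\<^sup>2 + (sinh \<xi>)\<^sup>2 * (Im w)\<^sup>2 + (cosh \<xi>)\<^sup>2 * (sinh \<xi>)\<^sup>2)"
  have "0 \<le> 1 - a"
    using cosh_real_ge_1[of "4 * \<xi>"] by (simp add: a_def)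
  have q: "ellipse_form \<xi> w < 1"
    using w by (simp add: ellipse_domain_eq)
  then have "(Re w)\<^sup>2 \<le> (cosh \<xi>)\<^sup>2" "(Im w)\<^sup>2 \<le> (sinh \<xi>)\<^sup>2"
    using ellipse_form_le_1_bounds[of \<xi> w] assms(1) by auto
  then have "(cosh \<xi>)\<^sup>2 * (Re w)\<^sup>2 \<le> (cosh \<xi>)\<^sup>2 * (cosh \<xi>)\<^sup>2"
            "(sinh \<xi>)\<^sup>2 * (Im w)\<^sup>2 \<le> (sinh \<xi>)\<^sup>2 * (sinh \<xi>)\<^sup>2"
    by (simp_all only: mult_left_mono zero_le_power2)
  then have "R \<le> M"
    unfolding R_def M_def a_def[symmetric] using \<open>0 \<le> 1 - a\<close> by (intro mult_left_mono) linarith+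
  moreover have "0 \<le> R"
    using \<open>0 \<le> 1 - a\<close> by (simp add: R_def)
  moreover have "(norm (w\<^sup>2))\<^sup>2 - Re (of_real a * w ^ 4 + of_real (1 - a) * w\<^sup>2 + of_real e)
                   = (ellipse_form \<xi> w - 1) * R"
    using norm_sq_square_ellipse_decomposition[OF assms(1), of w] by (simp add: a_def e_def R_def)
  ultimately show ?thesis
    using q by (simp add: abs_mult mult.commute mult_left_mono)
qed

lemma sinh_cosh_sq_ratio:
  "2 * (sinh x)\<^sup>2 * (cosh x)\<^sup>2 / ((sinh x)\<^sup>2 + (cosh x)\<^sup>2) = (sinh (2 * x))\<^sup>2 / (2 * cosh (2 * x))"
  for x :: real
proof -
  have "(sinh (2 * x))\<^sup>2 = 2 * (2 * (sinh x)\<^sup>2 * (cosh x)\<^sup>2)"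
    by (simp add: sinh_double power_mult_distrib)
  moreover have "2 * cosh (2 * x) = 2 * ((sinh x)\<^sup>2 + (cosh x)\<^sup>2)"
    by (simp add: cosh_double)
  ultimately show ?thesis
    by (simp only: mult_divide_mult_cancel_left_if) simp
qed

lemma sinh_cosh_sq_cosh_4x:
  "(sinh x)\<^sup>2 * (cosh x)\<^sup>2 * (1 - 1 / cosh (4 * x)) = sinh (2 * x) ^ 4 / (2 * cosh (4 * x))"
  for x :: real
proof -
  define T where "T = (sinh (2 * x))\<^sup>2"
  have "cosh (4 * x) = 1 + 2 * T"
    using cosh_double[of "2 * x"] by (simp add: cosh_square_eq T_def)
  moreover have "(sinh x)\<^sup>2 * (cosh x)\<^sup>2 = T / 4"
    by (simp add: sinh_double power_mult_distrib T_def)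
  moreover have "sinh (2 * x) ^ 4 = T\<^sup>2"
    by (simp add: T_def flip: power_mult)
  moreover have "1 + 2 * T > 0"
    by (simp add: T_def add_pos_nonneg)
  ultimately show ?thesis
    by (simp add: field_simps power2_eq_square)
qed

lemma Reals_power2_eq_norm_power2: "x \<in> \<real> \<Longrightarrow> x\<^sup>2 = complex_of_real ((norm x)\<^sup>2)"
  by (auto elim!: Reals_cases simp flip: of_real_power)

section \<open>The conformal map onto the ellipse\<close>

locale ellipse_conformal_map =
  fixes \<xi> :: real and f :: "complex \<Rightarrow> complex"
  assumes xi_pos: "\<xi> > 0"
    and holomorphic: "f holomorphic_on ball 0 1"
    and inj: "inj_on f (ball 0 1)"
    and image: "f ` ball 0 1 = ellipse_domain \<xi>"
    and zero: "f 0 = 0"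
    and deriv_real: "deriv f 0 \<in> \<real>"
    and deriv_pos: "Re (deriv f 0) > 0"
begin

lemma deriv_nonzero: "deriv f 0 \<noteq> 0"
  using deriv_pos by auto

lemma eventually_ellipse_form_near_1:
  assumes "\<epsilon> > 0"
  shows "\<forall>\<^sub>F r in at_left 1. \<forall>z. norm z = r \<longrightarrow> 1 - \<epsilon> < ellipse_form \<xi> (f z)"
proof -
  have "{w. ellipse_form \<xi> w \<le> 1 - \<epsilon>} \<subseteq> f ` ball 0 1"
    using assms by (auto simp: image ellipse_domain_eq)
  then have "\<forall>\<^sub>F r in at_left 1. \<forall>z. norm z = r \<longrightarrow> f z \<notin> {w. ellipse_form \<xi> w \<le> 1 - \<epsilon>}"
    using xi_pos assms
    by (intro eventually_circle_image_avoids_compact[OF holomorphic inj compact_ellipse_sublevel]) auto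
  then show ?thesis
    by (rule eventually_mono) auto
qed

lemma parseval_means_tendsto:
  assumes holG: "G holomorphic_on UNIV" and holP: "P holomorphic_on UNIV"
    and approx: "\<And>w. w \<in> ellipse_domain \<xi> \<Longrightarrow>
                   \<bar>(norm (G w))\<^sup>2 - Re (P w)\<bar> \<le> M * (1 - ellipse_form \<xi> w)"
  shows "((\<lambda>r. \<Sum>k. (norm (taylor_coeff (\<lambda>z. G (f z)) k))\<^sup>2 * r ^ (2 * k)) \<longlongrightarrow> Re (P 0)) (at_left 1)"
proof (rule tendstoI)
  fix \<epsilon> :: real assume "\<epsilon> > 0"
  have holg: "(\<lambda>z. G (f z)) holomorphic_on ball 0 1"
    using holomorphic_on_compose_gen[OF holomorphic holG] by (simp add: o_def)
  have holPf: "(\<lambda>z. P (f z)) holomorphic_on ball 0 1"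
    using holomorphic_on_compose_gen[OF holomorphic holP] by (simp add: o_def)
  have "0 \<le> M"
    using approx[of 0] by (simp add: ellipse_domain_eq ellipse_form_def)
  define \<delta> where "\<delta> = \<epsilon> / (2 * (M + 1))"
  have "\<delta> > 0" "M * \<delta> < \<epsilon>"
    using \<open>\<epsilon> > 0\<close> \<open>0 \<le> M\<close> by (auto simp: \<delta>_def field_simps intro!: add_nonneg_pos)
  show "\<forall>\<^sub>F r in at_left 1.
          dist (\<Sum>k. (norm (taylor_coeff (\<lambda>z. G (f z)) k))\<^sup>2 * r ^ (2 * k)) (Re (P 0)) < \<epsilon>"
    using eventually_conj[OF eventually_ellipse_form_near_1[OF \<open>\<delta> > 0\<close>] eventually_at_left_real[OF zero_less_one]]
  proof (rule eventually_mono, clarify)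
    fix r :: real assume r: "r \<in> {0<..<1}" and near: "\<forall>z. norm z = r \<longrightarrow> 1 - \<delta> < ellipse_form \<xi> (f z)"
    have "\<bar>(norm (G (f z)))\<^sup>2 - Re (P (f z))\<bar> \<le> M * \<delta>" if "norm z = r" for z
    proof -
      have "f z \<in> ellipse_domain \<xi>"
        using image that r by auto
      then show ?thesis
        using approx[of "f z"] near that \<open>0 \<le> M\<close> by (smt (verit) mult_left_mono)
    qed
    then have "\<bar>(\<Sum>k. (norm (taylor_coeff (\<lambda>z. G (f z)) k))\<^sup>2 * r ^ (2 * k)) - Re (P (f 0))\<bar> \<le> M * \<delta>"
      using parseval_harmonic_remainder[OF holg holPf] r by simp
    then show "dist (\<Sum>k. (norm (taylor_coeff (\<lambda>z. G (f z)) k))\<^sup>2 * r ^ (2 * k)) (Re (P 0)) < \<epsilon>"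
      using \<open>M * \<delta> < \<epsilon>\<close> by (simp add: dist_real_def zero)
  qed
qed

lemma sums_norm_taylor_coeff_sq:
  assumes holG: "G holomorphic_on UNIV" and holP: "P holomorphic_on UNIV"
    and approx: "\<And>w. w \<in> ellipse_domain \<xi> \<Longrightarrow>
                   \<bar>(norm (G w))\<^sup>2 - Re (P w)\<bar> \<le> M * (1 - ellipse_form \<xi> w)"
  shows "(\<lambda>k. (norm (taylor_coeff (\<lambda>z. G (f z)) k))\<^sup>2) sums Re (P 0)"
proof -
  define a where "a k = (norm (taylor_coeff (\<lambda>z. G (f z)) k))\<^sup>2" for k
  have holg: "(\<lambda>z. G (f z)) holomorphic_on ball 0 1"
    using holomorphic_on_compose_gen[OF holomorphic holG] by (simp add: o_def)
  have sqrt_power: "sqrt \<rho> ^ (2 * k) = \<rho> ^ k" if "0 \<le> \<rho>" for k \<rho>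
    using that by (simp add: power_mult)
  have "((\<lambda>\<rho>. \<Sum>k. a k * sqrt \<rho> ^ (2 * k)) \<longlongrightarrow> Re (P 0)) (at_left 1)"
    using filterlim_compose[OF parseval_means_tendsto[OF assms] filterlim_sqrt_at_left_1]
    by (simp add: o_def a_def)
  moreover have "\<forall>\<^sub>F \<rho> in at_left 1. (\<Sum>k. a k * sqrt \<rho> ^ (2 * k)) = (\<Sum>k. a k * \<rho> ^ k)"
    using eventually_at_left_real[of 0 1] by (rule eventually_mono) (auto simp: sqrt_power)
  ultimately have "((\<lambda>\<rho>. \<Sum>k. a k * \<rho> ^ k) \<longlongrightarrow> Re (P 0)) (at_left 1)"
    by (rule Lim_transform_eventually)
  moreover have "summable (\<lambda>k. a k * \<rho> ^ k)" if "0 < \<rho>" "\<rho> < 1" for \<rho>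
    using parseval_circlepath(1)[OF holg, of "sqrt \<rho>"] that by (simp add: a_def sqrt_power)
  ultimately have "a sums Re (P 0)"
    by (intro nonneg_Abel_limit_sums) (auto simp: a_def)
  then show ?thesis
    unfolding a_def .
qed

lemma taylor_coeff_even: "taylor_coeff f (2 * n) = 0"
proof -
  have "(\<lambda>z. f (- z)) holomorphic_on ball 0 1"
    using holomorphic_on_compose_gen[OF holomorphic_on_minus[OF holomorphic_on_id] holomorphic]
    by (simp add: o_def uminus_ball_0)
  then have hol: "(\<lambda>z. - f (- z)) holomorphic_on ball 0 1"
    by (rule holomorphic_on_minus)
  have "deriv (\<lambda>z. - f (- z)) 0 = deriv f 0"
    using taylor_coeff_reflect[OF holomorphic, of 1] by (simp add: taylor_coeff_def)
  then have "- f (- z) = f z" if "z \<in> ball 0 1" for z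
    using conformal_map_symmetric[OF holomorphic inj zero deriv_nonzero inj_uminus uminus_ball_0 inj_uminus
            _ hol _ _ that]
    by (simp add: image uminus_ellipse_domain zero)
  then have "taylor_coeff f k = - ((-1) ^ k * taylor_coeff f k)" for k
    using taylor_coeff_cong[OF holomorphic zero_less_one, of "\<lambda>z. - f (- z)"] taylor_coeff_reflect[OF holomorphic]
    by simp
  from this[of "2 * n"] show ?thesis
    by simp
qed

lemma taylor_coeff_real: "taylor_coeff f k \<in> \<real>"
proof -
  have hol: "(\<lambda>z. cnj (f (cnj z))) holomorphic_on ball 0 1"
    using holomorphic_on_compose_cnj_cnj[of f "ball 0 1"] holomorphic by (simp add: cnj_ball_0 o_def)
  have "deriv (\<lambda>z. cnj (f (cnj z))) 0 = deriv f 0"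
    using taylor_coeff_cnj_cnj[OF holomorphic, of 1] deriv_real by (simp add: taylor_coeff_def Reals_cnj_iff)
  then have "cnj (f (cnj z)) = f z" if "z \<in> ball 0 1" for z
    using conformal_map_symmetric[OF holomorphic inj zero deriv_nonzero inj_cnj cnj_ball_0 inj_cnj
            _ hol _ _ that]
    by (simp add: image cnj_ellipse_domain zero)
  then have "taylor_coeff f k = cnj (taylor_coeff f k)"
    using taylor_coeff_cong[OF holomorphic zero_less_one, of "\<lambda>z. cnj (f (cnj z))"] taylor_coeff_cnj_cnj[OF holomorphic]
    by simp
  then show ?thesis
    by (simp add: Reals_cnj_iff)
qed

lemma taylor_coeff_not_odd:
  assumes "k \<notin> range (\<lambda>n. 2 * n + 1)"
  shows "taylor_coeff f k = 0"
proof -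
  have "even k"
    using assms by (metis oddE rangeI)
  then show ?thesis
    using taylor_coeff_even[of "k div 2"] by simp
qed

lemma odd_taylor_series:
  assumes "z \<in> ball 0 1"
  shows "(\<lambda>n. taylor_coeff f (2*n+1) * z ^ (2*n+1)) sums f z"
    and "summable (\<lambda>n. norm (taylor_coeff f (2*n+1) * z ^ (2*n+1)))"
proof -
  have odd: "strict_mono (\<lambda>n::nat. 2 * n + 1)"
    by (rule strict_monoI) simp
  show "(\<lambda>n. taylor_coeff f (2*n+1) * z ^ (2*n+1)) sums f z"
    using sums_mono_reindex[OF odd, of "\<lambda>k. taylor_coeff f k * z ^ k"] taylor_coeff_not_odd
          taylor_coeff_sums[OF holomorphic, of z] assms by simp
  show "summable (\<lambda>n. norm (taylor_coeff f (2*n+1) * z ^ (2*n+1)))"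
    using summable_mono_reindex[OF odd, of "\<lambda>k. norm (taylor_coeff f k * z ^ k)"] taylor_coeff_not_odd
          summable_norm_taylor_series[OF holomorphic, of z] assms by simp
qed

lemma taylor_coeff_square:
  shows "taylor_coeff (\<lambda>z. (f z)\<^sup>2) (2*n+2) = (\<Sum>j\<le>n. taylor_coeff f (2*j+1) * taylor_coeff f (2*(n-j)+1))"
    and "k \<notin> range (\<lambda>n. 2 * n + 2) \<Longrightarrow> taylor_coeff (\<lambda>z. (f z)\<^sup>2) k = 0"
proof -
  have even: "strict_mono (\<lambda>n::nat. 2 * n + 2)"
    by (rule strict_monoI) simp
  have "(\<lambda>n. (\<Sum>j\<le>n. taylor_coeff f (2*j+1) * taylor_coeff f (2*(n-j)+1)) * z ^ (2*n+2)) sums (f z)\<^sup>2"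
    if "z \<in> ball 0 1" for z
    using odd_power_series_square[OF odd_taylor_series(2,1)[OF that]] .
  from taylor_coeff_lacunary[OF zero_less_one even this]
  show "taylor_coeff (\<lambda>z. (f z)\<^sup>2) (2*n+2) = (\<Sum>j\<le>n. taylor_coeff f (2*j+1) * taylor_coeff f (2*(n-j)+1))"
    and "k \<notin> range (\<lambda>n. 2 * n + 2) \<Longrightarrow> taylor_coeff (\<lambda>z. (f z)\<^sup>2) k = 0"
    by blast+
qed

lemma sums_odd_taylor_coeff_sq:
  "(\<lambda>n. (taylor_coeff f (2*n+1))\<^sup>2) sums
     complex_of_real (2 * (sinh \<xi>)\<^sup>2 * (cosh \<xi>)\<^sup>2 / ((sinh \<xi>)\<^sup>2 + (cosh \<xi>)\<^sup>2))"
proof -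
  define \<alpha> where "\<alpha> = 1 / ((cosh \<xi>)\<^sup>2 + (sinh \<xi>)\<^sup>2)"
  define \<beta> where "\<beta> = 2 * (sinh \<xi>)\<^sup>2 * (cosh \<xi>)\<^sup>2 / ((sinh \<xi>)\<^sup>2 + (cosh \<xi>)\<^sup>2)"
  have "\<beta> \<ge> 0"
    by (simp add: \<beta>_def)
  have "\<bar>(norm w)\<^sup>2 - Re (of_real \<alpha> * w\<^sup>2 + of_real \<beta>)\<bar> \<le> \<beta> * (1 - ellipse_form \<xi> w)"
    if "w \<in> ellipse_domain \<xi>" for w
    using norm_sq_ellipse_decomposition[of \<xi> w] xi_pos that \<open>\<beta> \<ge> 0\<close>
    by (simp add: \<alpha>_def \<beta>_def ellipse_domain_eq abs_mult)
  then have "(\<lambda>k. (norm (taylor_coeff f k))\<^sup>2) sums \<beta>"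
    using sums_norm_taylor_coeff_sq[of "\<lambda>w. w" "\<lambda>w. of_real \<alpha> * w\<^sup>2 + of_real \<beta>" \<beta>]
    by (simp add: holomorphic_intros)
  then have "(\<lambda>n. (norm (taylor_coeff f (2*n+1)))\<^sup>2) sums \<beta>"
    using sums_mono_reindex[of "\<lambda>n. 2*n+1" "\<lambda>k. (norm (taylor_coeff f k))\<^sup>2"] taylor_coeff_not_odd
    by (simp add: strict_mono_def)
  then have "(\<lambda>n. complex_of_real ((norm (taylor_coeff f (2*n+1)))\<^sup>2)) sums complex_of_real \<beta>"
    by (rule sums_of_real)
  then show ?thesis
    unfolding Reals_power2_eq_norm_power2[OF taylor_coeff_real] \<beta>_def .
qed

lemma sums_taylor_coeff_convolution_sq:
  "(\<lambda>n. (\<Sum>j\<le>n. taylor_coeff f (2*j+1) * taylor_coeff f (2*(n-j)+1))\<^sup>2) sums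
     complex_of_real ((sinh \<xi>)\<^sup>2 * (cosh \<xi>)\<^sup>2 * (1 - 1 / cosh (4 * \<xi>)))"
proof -
  define a where "a = 1 / cosh (4 * \<xi>)"
  define e where "e = (sinh \<xi>)\<^sup>2 * (cosh \<xi>)\<^sup>2 * (1 - 1 / cosh (4 * \<xi>))"
  define M where "M = (1 - a)
    * ((cosh \<xi>)\<^sup>2 * (cosh \<xi>)\<^sup>2 + (sinh \<xi>)\<^sup>2 * (sinh \<xi>)\<^sup>2 + (cosh \<xi>)\<^sup>2 * (sinh \<xi>)\<^sup>2)"
  define B where "B n = (\<Sum>j\<le>n. taylor_coeff f (2*j+1) * taylor_coeff f (2*(n-j)+1))" for n
  have "\<bar>(norm (w\<^sup>2))\<^sup>2 - Re (of_real a * w ^ 4 + of_real (1 - a) * w\<^sup>2 + of_real e)\<bar>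
          \<le> M * (1 - ellipse_form \<xi> w)" if "w \<in> ellipse_domain \<xi>" for w
    using norm_sq_square_ellipse_approx[OF _ that] xi_pos by (simp add: a_def e_def M_def)
  then have "(\<lambda>k. (norm (taylor_coeff (\<lambda>z. (f z)\<^sup>2) k))\<^sup>2) sums e"
    using sums_norm_taylor_coeff_sq[of "\<lambda>w. w\<^sup>2" "\<lambda>w. of_real a * w ^ 4 + of_real (1 - a) * w\<^sup>2 + of_real e" M]
    by (simp add: holomorphic_intros)
  then have "(\<lambda>n. (norm (taylor_coeff (\<lambda>z. (f z)\<^sup>2) (2*n+2)))\<^sup>2) sums e"
    using sums_mono_reindex[of "\<lambda>n. 2*n+2" "\<lambda>k. (norm (taylor_coeff (\<lambda>z. (f z)\<^sup>2) k))\<^sup>2"]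
          taylor_coeff_square(2)
    by (simp add: strict_mono_def)
  then have "(\<lambda>n. (norm (B n))\<^sup>2) sums e"
    by (simp only: taylor_coeff_square(1) B_def)
  then have "(\<lambda>n. complex_of_real ((norm (B n))\<^sup>2)) sums complex_of_real e"
    by (rule sums_of_real)
  moreover have "B n \<in> \<real>" for n
    using taylor_coeff_real by (simp add: B_def)
  ultimately have "(\<lambda>n. (B n)\<^sup>2) sums complex_of_real e"
    by (simp only: Reals_power2_eq_norm_power2)
  then show ?thesis
    by (simp only: B_def e_def)
qed

end

theorem mainTheorem4:
  fixes \<xi> :: real and f :: "complex \<Rightarrow> complex"
  assumes "\<xi> > 0"
    and "f holomorphic_on ball 0 1"
    and "inj_on f (ball 0 1)"
    and "f ` ball 0 1 = ellipse_domain \<xi>"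
    and "f 0 = 0"
    and "deriv f 0 \<in> \<real>" and "Re (deriv f 0) > 0"
  defines "A \<equiv> (\<lambda>n. taylor_coeff f (2 * n + 1))"
  shows "(\<forall>n. taylor_coeff f (2 * n) = 0)
    \<and> (\<lambda>n. (A n)\<^sup>2) sums complex_of_real
         (2 * (sinh \<xi>)\<^sup>2 * (cosh \<xi>)\<^sup>2 / ((sinh \<xi>)\<^sup>2 + (cosh \<xi>)\<^sup>2))
    \<and> (\<lambda>n. (A n)\<^sup>2) sums complex_of_real ((sinh (2 * \<xi>))\<^sup>2 / (2 * cosh (2 * \<xi>)))
    \<and> (\<lambda>n. (\<Sum>j\<le>n. A j * A (n - j))\<^sup>2) sums
         complex_of_real ((sinh (2 * \<xi>)) ^ 4 / (2 * cosh (4 * \<xi>)))"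
proof -
  interpret ellipse_conformal_map \<xi> f
    using assms(1-7) by unfold_locales
  show ?thesis
    using taylor_coeff_even sums_odd_taylor_coeff_sq sums_taylor_coeff_convolution_sq
    unfolding A_def sinh_cosh_sq_ratio sinh_cosh_sq_cosh_4x by simp
qed

end
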